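(* Let $\Psi\subseteq\Omega$ be nonempty, $D=D(\Psi)$, $B\subseteq D$, and let $c=(c_{\underline\psi})_\Psi\in C^\perp(V_B,\Psi)$, i.e. $\sum_{\underline\psi\in\Psi}c_{\underline\psi}\underline\psi^{\underline b}=0$ for all $\underline b\in B$. Let $h=(h_{\underline d})_D=\mathcal{P}_\Psi(c)$ (so $c=\mathcal{C}_\Psi(h)$). Let $\emptyset\neq\Phi\subseteq\Psi$ with $D(\Phi)\subseteq B$, let $e=(e_{\underline\psi})_\Psi\in V_\Psi$ with $e_{\underline\psi}=0$ for $\underline\psi\notin\Phi$, let $r=c+e$, and put $\tilde r_{\underline d}=\sum_{\underline\psi\in\Psi}r_{\underline\psi}\underline\psi^{\underline d}$ for $\underline d\in D$. Then: (i) $h_{\underline b}=0$ and $\tilde r_{\underline b}=\sum_{\underline\phi\in\Phi}e_{\underline\phi}\underline\phi^{\underline b}$ for all $\underline b\in B$; (ii) if $(k_{\underline a})_A=\mathcal{E}_\Phi\big((\tilde r_{\underline d})_{\underline d\in D(\Phi)}\big)$, then $h_{\underline d}=\tilde r_{\underline d}-k_{\underline d}$ for all $\underline d\in D$; (iii) $\mathcal{C}_\Phi\big((\tilde r_{\underline d})_{\underline d\in D(\Phi)}\big)=(e_{\underline\phi})_{\underline\phi\in\Phi}$, hence $c$ is recovered as $r$ minus the extension by zero of this vector.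
   Context: Let $q$ be a prime power, $N\ge1$, $A=\{0,\dots,q-1\}^N$, $\Omega=\mathbb{F}_q^N$, $V_S$ the $\mathbb{F}_q$-vector space of vectors indexed by a finite set $S$; $\underline\psi^{\underline d}=\psi_1^{d_1}\cdots\psi_N^{d_N}$ with $0^0=1$. Fix a monomial order $\preceq$ on $\mathbb{F}_q[x_1,\dots,x_N]$. For nonempty $\Theta\subseteq\Omega$: $Z_\Theta$ is the ideal of polynomials vanishing on $\Theta$; the delta set $D(\Theta)$ is the set of $\underline d\in\mathbb{N}_0^N$ with $\underline x^{\underline d}$ not the leading monomial of a nonzero element of $Z_\Theta$ (note $D(\Theta)\subseteq A$, and $D(\Phi)\subseteq D(\Psi)$ for $\Phi\subseteq\Psi$); $\mathcal{P}_\Theta:V_\Theta\to V_{D(\Theta)}$, $(c_{\underline\theta})\mapsto(\sum_{\underline\theta\in\Theta}c_{\underline\theta}\underline\theta^{\underline d})_{\underline d\in D(\Theta)}$ is an isomorphism and $\mathcal{C}_\Theta=\mathcal{P}_\Theta^{-1}$, which equals $\mathcal{R}_\Theta\circ\mathcal{F}^{-1}\circ\mathcal{E}_\Theta$ where $\mathcal{R}_\Theta$ is restriction to $\Theta$, $\mathcal{F}^{-1}$ is the generalized inverse DFT $V_A\to V_\Omega$, and $\mathcal{E}_\Theta:V_{D(\Theta)}\to V_A$ is the extension map: $(h_{\underline d})\mapsto(h_{\underline a})_A$ with $h_{\underline a}=\sum_{\underline d\in D(\Theta)}v^{(\underline a)}_{\underline d}h_{\underline d}$, where $\sum_{\underline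 d}v^{(\underline a)}_{\underline d}\underline x^{\underline d}$ is the remainder of $\underline x^{\underline a}$ on division by a Gröbner basis of $Z_\Theta$. For $B\subseteq D(\Psi)$, $C^\perp(V_B,\Psi)=\{(c_{\underline\psi})_\Psi:\sum_{\underline\psi}c_{\underline\psi}\underline\psi^{\underline b}=0\ \forall\underline b\in B\}$. *)

theory Defs
  imports Main
begin

text \<open>Points of \<Omega> = F_q^N are functions 'n \<Rightarrow> 'a ('n a finite index type of size N,
  'a a finite field with q elements).
  Polynomials in F_q[x_1..x_N] are finitely supported coefficient functions.\<close>

definition mono_val :: "('n::finite \<Rightarrow> 'a::field) \<Rightarrow> ('n \<Rightarrow> nat) \<Rightarrow> 'a" where
  "mono_val \<theta> d = (\<Prod>i\<in>UNIV. \<theta> i ^ d i)"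

definition is_poly :: "(('n::finite \<Rightarrow> nat) \<Rightarrow> 'a::field) \<Rightarrow> bool" where
  "is_poly f \<longleftrightarrow> finite {d. f d \<noteq> 0}"

definition poly_eval :: "(('n::finite \<Rightarrow> nat) \<Rightarrow> 'a::field) \<Rightarrow> ('n \<Rightarrow> 'a) \<Rightarrow> 'a" where
  "poly_eval f \<theta> = (\<Sum>d\<in>{d. f d \<noteq> 0}. f d * mono_val \<theta> d)"

definition vanish_ideal :: "('n::finite \<Rightarrow> 'a::field) set \<Rightarrow> (('n \<Rightarrow> nat) \<Rightarrow> 'a) set" where
  "vanish_ideal \<Theta> = {f. is_poly f \<and> (\<forall>\<theta>\<in>\<Theta>. poly_eval f \<theta> = 0)}"

text \<open>Monomial orders on exponent vectors (ord a b means x^a \<preceq> x^b).\<close>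
definition monomial_order :: "(('n::finite \<Rightarrow> nat) \<Rightarrow> ('n \<Rightarrow> nat) \<Rightarrow> bool) \<Rightarrow> bool" where
  "monomial_order ord \<longleftrightarrow>
     (\<forall>a. ord a a) \<and> (\<forall>a b. ord a b \<and> ord b a \<longrightarrow> a = b) \<and>
     (\<forall>a b c. ord a b \<and> ord b c \<longrightarrow> ord a c) \<and> (\<forall>a b. ord a b \<or> ord b a) \<and>
     wf {(a, b). ord a b \<and> a \<noteq> b} \<and>
     (\<forall>a. ord (\<lambda>_. 0) a) \<and>
     (\<forall>a b c. ord a b \<longrightarrow> ord (\<lambda>i. a i + c i) (\<lambda>i. b i + c i))"

definition lead_mono :: "(('n::finite \<Rightarrow> nat) \<Rightarrow> ('n \<Rightarrow> nat) \<Rightarrow> bool) \<Rightarrow> (('n \<Rightarrow> nat) \<Rightarrow> 'a::field) \<Rightarrow> ('n \<Rightarrow> nat)" where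
  "lead_mono ord f = (THE d. f d \<noteq> 0 \<and> (\<forall>d'. f d' \<noteq> 0 \<longrightarrow> ord d' d))"

definition delta_set :: "(('n::finite \<Rightarrow> nat) \<Rightarrow> ('n \<Rightarrow> nat) \<Rightarrow> bool) \<Rightarrow> ('n \<Rightarrow> 'a::field) set \<Rightarrow> ('n \<Rightarrow> nat) set" where
  "delta_set ord \<Theta> = {d. \<not> (\<exists>f\<in>vanish_ideal \<Theta>. f \<noteq> (\<lambda>_. 0) \<and> lead_mono ord f = d)}"

text \<open>P_\<Theta>: (c_\<theta>) \<mapsto> (\<Sum>_\<theta> c_\<theta> \<theta>^d)_d (we compute it for every d; only d \<in> D(\<Theta>) matters).\<close>
definition P_map :: "('n::finite \<Rightarrow> 'a::field) set \<Rightarrow> (('n \<Rightarrow> 'a) \<Rightarrow> 'a) \<Rightarrow> ('n \<Rightarrow> nat) \<Rightarrow> 'a" where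
  "P_map \<Theta> c = (\<lambda>d. \<Sum>\<theta>\<in>\<Theta>. c \<theta> * mono_val \<theta> d)"

definition C_map :: "(('n::finite \<Rightarrow> nat) \<Rightarrow> ('n \<Rightarrow> nat) \<Rightarrow> bool) \<Rightarrow> ('n \<Rightarrow> 'a::field) set \<Rightarrow> (('n \<Rightarrow> nat) \<Rightarrow> 'a) \<Rightarrow> ('n \<Rightarrow> 'a) \<Rightarrow> 'a" where
  "C_map ord \<Theta> h = (THE c. (\<forall>x. x \<notin> \<Theta> \<longrightarrow> c x = 0) \<and> (\<forall>d\<in>delta_set ord \<Theta>. P_map \<Theta> c d = h d))"

text \<open>Remainder of x^a on division by a Groebner basis of Z_\<Theta>, characterised as the unique
  normal form: polynomial supported in D(\<Theta>) congruent to x^a modulo Z_\<Theta>.\<close>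
definition remainder :: "(('n::finite \<Rightarrow> nat) \<Rightarrow> ('n \<Rightarrow> nat) \<Rightarrow> bool) \<Rightarrow> ('n \<Rightarrow> 'a::field) set \<Rightarrow> ('n \<Rightarrow> nat) \<Rightarrow> (('n \<Rightarrow> nat) \<Rightarrow> 'a)" where
  "remainder ord \<Theta> a = (THE v. is_poly v \<and> {d. v d \<noteq> 0} \<subseteq> delta_set ord \<Theta> \<and>
       (\<lambda>d. (if d = a then 1 else 0) - v d) \<in> vanish_ideal \<Theta>)"

text \<open>Extension map E_\<Theta>: V_{D(\<Theta>)} \<rightarrow> V_A (we compute it for every a; only a \<in> A matters).\<close>
definition ext_map :: "(('n::finite \<Rightarrow> nat) \<Rightarrow> ('n \<Rightarrow> nat) \<Rightarrow> bool) \<Rightarrow> ('n \<Rightarrow> 'a::field) set \<Rightarrow> (('n \<Rightarrow> nat) \<Rightarrow> 'a) \<Rightarrow> ('n \<Rightarrow> nat) \<Rightarrow> 'a" where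
  "ext_map ord \<Theta> h = (\<lambda>a. \<Sum>d\<in>delta_set ord \<Theta>. remainder ord \<Theta> a d * h d)"

definition Cperp :: "('n::finite \<Rightarrow> nat) set \<Rightarrow> ('n \<Rightarrow> 'a::field) set \<Rightarrow> (('n \<Rightarrow> 'a) \<Rightarrow> 'a) set" where
  "Cperp B \<Psi> = {c. \<forall>b\<in>B. (\<Sum>\<psi>\<in>\<Psi>. c \<psi> * mono_val \<psi> b) = 0}"

end

theory Submission
  imports Defs
begin

text \<open>
  Everything reduces to two facts about the
  delta set of a point set \<Theta> over a finite field:
   (1) the remainder (normal form) of x^a modulo Z_\<Theta> exists and is unique, so that
       \<theta>^a = \<Sum>_{d \<in> D(\<Theta>)} rem_a(d) \<theta>^d for \<theta> \<in> \<Theta>; and D(\<Theta>) is finite;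
   (2) P_\<Theta> is injective: a weight vector on \<Theta> annihilating the monomials of D(\<Theta>)
       annihilates all monomials, hence all polynomial functions, hence is zero.
\<close>

lemma mono_val_add: "mono_val \<theta> (\<lambda>i. a i + b i) = mono_val \<theta> a * mono_val \<theta> b"
  by (simp add: mono_val_def power_add prod.distrib)

lemma mono_val_zero: "mono_val \<theta> (\<lambda>_. 0) = 1"
  by (simp add: mono_val_def)

lemma mono_val_unit: "mono_val \<theta> (\<lambda>j. if j = i then 1 else 0) = \<theta> i"
proof -
  have "(\<Prod>j\<in>UNIV. \<theta> j ^ (if j = i then 1 else 0)) = (\<Prod>j\<in>UNIV. if j = i then \<theta> j else 1)"
    by (rule prod.cong) auto
  then show ?thesis by (simp add: mono_val_def prod.delta)
qed

lemma poly_eval_eq: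
  assumes "finite S" "{d. f d \<noteq> 0} \<subseteq> S"
  shows "poly_eval f \<theta> = (\<Sum>d\<in>S. f d * mono_val \<theta> d)"
  unfolding poly_eval_def by (rule sum.mono_neutral_left) (use assms in auto)

lemma vanish_ideal_iff:
  assumes "finite S" "{d. f d \<noteq> 0} \<subseteq> S"
  shows "f \<in> vanish_ideal \<Theta> \<longleftrightarrow> (\<forall>\<theta>\<in>\<Theta>. (\<Sum>d\<in>S. f d * mono_val \<theta> d) = 0)"
  using assms finite_subset poly_eval_eq[OF assms]
  unfolding vanish_ideal_def is_poly_def by auto

lemma vanish_ideal_lincomb:
  assumes "f \<in> vanish_ideal \<Theta>" "g \<in> vanish_ideal \<Theta>"
  shows "(\<lambda>d. k * f d + l * g d) \<in> vanish_ideal \<Theta>"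
proof -
  let ?S = "{d. f d \<noteq> 0} \<union> {d. g d \<noteq> 0}"
  have S: "finite ?S" using assms by (auto simp: vanish_ideal_def is_poly_def)
  have "\<forall>\<theta>\<in>\<Theta>. (\<Sum>d\<in>?S. f d * mono_val \<theta> d) = 0" "\<forall>\<theta>\<in>\<Theta>. (\<Sum>d\<in>?S. g d * mono_val \<theta> d) = 0"
    using assms vanish_ideal_iff[OF S] by auto
  then show ?thesis
    by (subst vanish_ideal_iff[OF S])
       (auto simp: distrib_right sum.distrib mult.assoc simp flip: sum_distrib_left)
qed

lemma monomial_order_total_order:
  assumes "monomial_order ord"
  shows "ord a a" "ord a b \<Longrightarrow> ord b a \<Longrightarrow> a = b"
    "ord a b \<Longrightarrow> ord b c \<Longrightarrow> ord a c" "ord a b \<or> ord b a"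
  using assms unfolding monomial_order_def by meson+

lemma monomial_order_has_max:
  assumes mo: "monomial_order ord" and "finite X" "X \<noteq> {}"
  shows "\<exists>m\<in>X. \<forall>x\<in>X. ord x m"
  using assms(2,3)
proof (induction X rule: finite_ne_induct)
  case (singleton x)
  then show ?case using monomial_order_total_order(1)[OF mo] by auto
next
  case (insert x F)
  then obtain m where m: "m \<in> F" "\<forall>y\<in>F. ord y m" by blast
  show ?case
  proof (cases "ord x m")
    case True
    then show ?thesis using m by auto
  next
    case False
    then have "ord m x" using monomial_order_total_order(4)[OF mo] by blast
    then have "\<forall>y\<in>insert x F. ord y x"
      using m monomial_order_total_order(1,3)[OF mo] by blast
    then show ?thesis by blast
  qed
qed

lemma lead_mono_spec:
  assumes mo: "monomial_order ord" and "is_poly f" "f \<noteq> (\<lambda>_. 0)"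
  shows "f (lead_mono ord f) \<noteq> 0" "f d \<noteq> 0 \<Longrightarrow> ord d (lead_mono ord f)"
proof -
  have "finite {d. f d \<noteq> 0}" "{d. f d \<noteq> 0} \<noteq> {}" using assms by (auto simp: is_poly_def)
  from monomial_order_has_max[OF mo this]
  obtain m where m: "f m \<noteq> 0" "\<And>x. f x \<noteq> 0 \<Longrightarrow> ord x m" by blast
  have "lead_mono ord f = m"
    unfolding lead_mono_def
  proof (rule the_equality)
    show "f m \<noteq> 0 \<and> (\<forall>d'. f d' \<noteq> 0 \<longrightarrow> ord d' m)" using m by blast
  next
    fix d assume "f d \<noteq> 0 \<and> (\<forall>d'. f d' \<noteq> 0 \<longrightarrow> ord d' d)"
    then show "d = m" using m monomial_order_total_order(2)[OF mo] by blast
  qed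
  then show "f (lead_mono ord f) \<noteq> 0" "f d \<noteq> 0 \<Longrightarrow> ord d (lead_mono ord f)" using m by auto
qed

text \<open>The defining property of the delta set: a polynomial supported in D(\<Theta>) that
  vanishes on \<Theta> is zero (otherwise its leading monomial would lie outside D(\<Theta>)).\<close>
lemma delta_set_supported_vanishing:
  assumes mo: "monomial_order ord" and "is_poly w" "{d. w d \<noteq> 0} \<subseteq> delta_set ord \<Theta>"
    and "w \<in> vanish_ideal \<Theta>"
  shows "w = (\<lambda>_. 0)"
proof (rule ccontr)
  assume nz: "w \<noteq> (\<lambda>_. 0)"
  then have "lead_mono ord w \<in> delta_set ord \<Theta>"
    using lead_mono_spec(1)[OF mo assms(2)] assms(3) by blast
  then show False using nz assms(4) unfolding delta_set_def by blast
qed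

definition has_normal_form ::
  "(('n::finite \<Rightarrow> nat) \<Rightarrow> ('n \<Rightarrow> nat) \<Rightarrow> bool) \<Rightarrow> ('n \<Rightarrow> 'a::field) set \<Rightarrow> (('n \<Rightarrow> nat) \<Rightarrow> 'a) \<Rightarrow> bool"
  where "has_normal_form ord \<Theta> f \<longleftrightarrow>
    (\<exists>v. is_poly v \<and> {d. v d \<noteq> 0} \<subseteq> delta_set ord \<Theta> \<and> (\<lambda>d. f d - v d) \<in> vanish_ideal \<Theta>)"

lemma has_normal_form_zero: "has_normal_form ord \<Theta> (\<lambda>_. 0)"
  unfolding has_normal_form_def
  by (rule exI[of _ "\<lambda>_. 0"]) (simp add: is_poly_def vanish_ideal_def poly_eval_def)

lemma has_normal_form_lincomb:
  assumes "has_normal_form ord \<Theta> f" "has_normal_form ord \<Theta> g"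
  shows "has_normal_form ord \<Theta> (\<lambda>d. k * f d + l * g d)"
proof -
  obtain v w where v: "is_poly v" "{d. v d \<noteq> 0} \<subseteq> delta_set ord \<Theta>" "(\<lambda>d. f d - v d) \<in> vanish_ideal \<Theta>"
    and w: "is_poly w" "{d. w d \<noteq> 0} \<subseteq> delta_set ord \<Theta>" "(\<lambda>d. g d - w d) \<in> vanish_ideal \<Theta>"
    using assms unfolding has_normal_form_def by blast
  let ?u = "\<lambda>d. k * v d + l * w d"
  have "{d. ?u d \<noteq> 0} \<subseteq> {d. v d \<noteq> 0} \<union> {d. w d \<noteq> 0}" by auto
  then have "is_poly ?u" "{d. ?u d \<noteq> 0} \<subseteq> delta_set ord \<Theta>"
    using v w finite_subset unfolding is_poly_def by blast+
  moreover have "(\<lambda>d. (k * f d + l * g d) - ?u d) \<in> vanish_ideal \<Theta>"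
    using vanish_ideal_lincomb[OF v(3) w(3), of k l] by (simp add: algebra_simps)
  ultimately show ?thesis unfolding has_normal_form_def by blast
qed

lemma has_normal_form_sum:
  assumes "finite T" "\<And>t. t \<in> T \<Longrightarrow> has_normal_form ord \<Theta> (F t)"
  shows "has_normal_form ord \<Theta> (\<lambda>d. \<Sum>t\<in>T. F t d)"
  using assms
proof (induction T rule: finite_induct)
  case empty
  then show ?case using has_normal_form_zero by simp
next
  case (insert t T)
  then show ?case
    using has_normal_form_lincomb[of ord \<Theta> "F t" "\<lambda>d. \<Sum>t\<in>T. F t d" 1 1] by simp
qed

lemma has_normal_form_poly:
  assumes "is_poly f" "\<And>t. f t \<noteq> 0 \<Longrightarrow> has_normal_form ord \<Theta> (\<lambda>d. if d = t then 1 else 0)"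
  shows "has_normal_form ord \<Theta> f"
proof -
  let ?T = "{t. f t \<noteq> 0}"
  have "f d = (\<Sum>t\<in>?T. f t * (if d = t then 1 else 0))" for d
  proof -
    have "(\<Sum>t\<in>?T. f t * (if d = t then 1 else 0)) = (\<Sum>t\<in>?T. if d = t then f d else 0)"
      by (rule sum.cong) auto
    then show ?thesis using assms(1) by (simp add: is_poly_def)
  qed
  moreover have "has_normal_form ord \<Theta> (\<lambda>d. \<Sum>t\<in>?T. f t * (if d = t then 1 else 0))"
    using assms has_normal_form_lincomb[of ord \<Theta> _ _ _ 0] has_normal_form_zero
    by (intro has_normal_form_sum) (auto simp: is_poly_def)
  ultimately show ?thesis by (metis (no_types, lifting) ext)
qed

text \<open>By well-founded induction
  along the order: if a \<notin> D(\<Theta>), some f \<in> Z_\<Theta> has leading monomial a, and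
  x^a - f / f(a) only involves monomials smaller than a.\<close>
lemma has_normal_form_monomial:
  fixes \<Theta> :: "('n::finite \<Rightarrow> 'a::field) set"
  assumes mo: "monomial_order ord"
  shows "has_normal_form ord \<Theta> (\<lambda>d. if d = a then 1 else 0)"
proof -
  have wf: "wf {(a, b). ord a b \<and> a \<noteq> b}" using mo unfolding monomial_order_def by blast
  show ?thesis
  proof (induction a rule: wf_induct[OF wf])
    case (1 a)
    show ?case
    proof (cases "a \<in> delta_set ord \<Theta>")
      case True
      then show ?thesis unfolding has_normal_form_def
        by (intro exI[of _ "\<lambda>d. if d = a then 1 else 0"])
           (auto simp: is_poly_def vanish_ideal_def poly_eval_def)
    next
      case False
      then obtain f where f: "f \<in> vanish_ideal \<Theta>" "f \<noteq> (\<lambda>_. 0)" "lead_mono ord f = a"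
        unfolding delta_set_def by blast
      have "is_poly f" using f(1) by (simp add: vanish_ideal_def)
      note lead = lead_mono_spec[OF mo this f(2), unfolded f(3)]
      define g where "g = (\<lambda>d. (if d = a then 1 else 0) - f d / f a)"
      have g_supp: "{d. g d \<noteq> 0} \<subseteq> {d. f d \<noteq> 0} - {a}"
        using lead(1) by (auto simp: g_def)
      have "has_normal_form ord \<Theta> g"
      proof (rule has_normal_form_poly)
        show "is_poly g"
          using g_supp \<open>is_poly f\<close> finite_subset unfolding is_poly_def by blast
        fix t assume "g t \<noteq> 0"
        then have "(t, a) \<in> {(a, b). ord a b \<and> a \<noteq> b}" using g_supp lead(2) by blast
        then show "has_normal_form ord \<Theta> (\<lambda>d. if d = t then 1 else 0)" using 1 by blast
      qed
      then obtain v where v: "is_poly v" "{d. v d \<noteq> 0} \<subseteq> delta_set ord \<Theta>"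
        "(\<lambda>d. g d - v d) \<in> vanish_ideal \<Theta>"
        unfolding has_normal_form_def by blast
      have "(\<lambda>d. 1 * (g d - v d) + 1 / f a * f d) \<in> vanish_ideal \<Theta>"
        by (rule vanish_ideal_lincomb[OF v(3) f(1)])
      then have "(\<lambda>d. (if d = a then 1 else 0) - v d) \<in> vanish_ideal \<Theta>"
        by (simp add: g_def)
      then show ?thesis using v(1,2) unfolding has_normal_form_def by blast
    qed
  qed
qed

text \<open>By the delta-set property the normal form is unique, so the remainder is well defined
  and is this normal form.\<close>
lemma remainder_spec:
  fixes \<Theta> :: "('n::finite \<Rightarrow> 'a::field) set"
  assumes mo: "monomial_order ord"
  shows "{d. remainder ord \<Theta> a d \<noteq> 0} \<subseteq> delta_set ord \<Theta>"
    "(\<lambda>d. (if d = a then 1 else 0) - remainder ord \<Theta> a d) \<in> vanish_ideal \<Theta>"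
proof -
  let ?P = "\<lambda>v. is_poly v \<and> {d. v d \<noteq> 0} \<subseteq> delta_set ord \<Theta> \<and>
              (\<lambda>d. (if d = a then 1 else 0) - v d) \<in> vanish_ideal \<Theta>"
  have "\<exists>!v. ?P v"
  proof (rule ex_ex1I)
    show "\<exists>v. ?P v" using has_normal_form_monomial[OF mo] unfolding has_normal_form_def by blast
  next
    fix v w assume v: "?P v" and w: "?P w"
    let ?u = "\<lambda>d. v d - w d"
    have "(\<lambda>d. 1 * ((if d = a then 1 else 0) - w d) + (-1) * ((if d = a then 1 else 0) - v d))
          \<in> vanish_ideal \<Theta>"
      using v w by (intro vanish_ideal_lincomb) blast+
    then have u_van: "?u \<in> vanish_ideal \<Theta>" by simp
    have u_supp: "{d. ?u d \<noteq> 0} \<subseteq> delta_set ord \<Theta>"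
    proof
      fix x assume "x \<in> {d. ?u d \<noteq> 0}"
      then have "v x \<noteq> 0 \<or> w x \<noteq> 0" by auto
      then show "x \<in> delta_set ord \<Theta>" using v w by blast
    qed
    have "is_poly ?u" using u_van by (simp add: vanish_ideal_def)
    from delta_set_supported_vanishing[OF mo this u_supp u_van]
    have "?u = (\<lambda>_. 0)" .
    then show "v = w" by (simp add: fun_eq_iff)
  qed
  from theI'[OF this] show "{d. remainder ord \<Theta> a d \<noteq> 0} \<subseteq> delta_set ord \<Theta>"
    "(\<lambda>d. (if d = a then 1 else 0) - remainder ord \<Theta> a d) \<in> vanish_ideal \<Theta>"
    unfolding remainder_def by blast+
qed

text \<open>Over a finite field D(\<Theta>) is finite: distinct d \<in> D(\<Theta>) give distinct functions
  \<theta> \<mapsto> \<theta>^d on \<Theta>, of which there are finitely many.\<close>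
lemma delta_set_finite:
  fixes \<Theta> :: "('n::finite \<Rightarrow> 'a::{finite,field}) set"
  assumes mo: "monomial_order ord"
  shows "finite (delta_set ord \<Theta>)"
proof -
  let ?ev = "\<lambda>d \<theta>. if \<theta> \<in> \<Theta> then mono_val \<theta> d else (0::'a)"
  have "inj_on ?ev (delta_set ord \<Theta>)"
  proof (rule inj_onI, rule ccontr)
    fix d1 d2 assume d: "d1 \<in> delta_set ord \<Theta>" "d2 \<in> delta_set ord \<Theta>" "?ev d1 = ?ev d2" "d1 \<noteq> d2"
    define w where "w = (\<lambda>d. (if d = d1 then 1 else 0) - (if d = d2 then 1 else (0::'a)))"
    have supp: "{d. w d \<noteq> 0} \<subseteq> {d1, d2}" by (auto simp: w_def)
    then have "is_poly w" "{d. w d \<noteq> 0} \<subseteq> delta_set ord \<Theta>"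
      using d(1,2) finite_subset unfolding is_poly_def by auto
    moreover have "w \<in> vanish_ideal \<Theta>"
    proof (subst vanish_ideal_iff[OF _ supp], simp, intro ballI)
      fix \<theta> assume "\<theta> \<in> \<Theta>"
      then have "mono_val \<theta> d1 = mono_val \<theta> d2" using fun_cong[OF d(3), of \<theta>] by simp
      then show "(\<Sum>d\<in>{d1, d2}. w d * mono_val \<theta> d) = 0" using d(4) by (simp add: w_def)
    qed
    ultimately have "w d1 = 0" using delta_set_supported_vanishing[OF mo] by metis
    then show False using d(4) by (simp add: w_def)
  qed
  then show ?thesis by (rule inj_on_finite) auto
qed

lemma remainder_eval:
  fixes \<Theta> :: "('n::finite \<Rightarrow> 'a::{finite,field}) set"
  assumes mo: "monomial_order ord" and "\<theta> \<in> \<Theta>"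
  shows "mono_val \<theta> a = (\<Sum>d\<in>delta_set ord \<Theta>. remainder ord \<Theta> a d * mono_val \<theta> d)"
proof -
  let ?D = "delta_set ord \<Theta>" and ?r = "remainder ord \<Theta> a"
  let ?S = "insert a ?D"
  have S: "finite ?S" using delta_set_finite[OF mo] by simp
  note r = remainder_spec[OF mo, where \<Theta>=\<Theta> and a=a]
  have supp: "{d. (if d = a then 1 else 0) - ?r d \<noteq> 0} \<subseteq> ?S"
    using r(1) by (auto split: if_splits)
  have "0 = (\<Sum>d\<in>?S. ((if d = a then 1 else 0) - ?r d) * mono_val \<theta> d)"
    using r(2) assms(2) vanish_ideal_iff[OF S supp] by simp
  also have "\<dots> = (\<Sum>d\<in>?S. if d = a then mono_val \<theta> d else 0) - (\<Sum>d\<in>?S. ?r d * mono_val \<theta> d)"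
    unfolding sum_subtractf[symmetric] by (rule sum.cong) (auto simp: left_diff_distrib)
  also have "\<dots> = mono_val \<theta> a - (\<Sum>d\<in>?S. ?r d * mono_val \<theta> d)"
    using S by (simp add: sum.delta)
  also have "(\<Sum>d\<in>?S. ?r d * mono_val \<theta> d) = (\<Sum>d\<in>?D. ?r d * mono_val \<theta> d)"
    using S r(1) by (intro sum.mono_neutral_right) auto
  finally show ?thesis by simp
qed

definition orthogonal_to_monomials :: "('n::finite \<Rightarrow> 'a::field) set \<Rightarrow> (('n \<Rightarrow> 'a) \<Rightarrow> 'a) \<Rightarrow> bool"
  where "orthogonal_to_monomials \<Theta> g \<longleftrightarrow> (\<forall>a. (\<Sum>\<theta>\<in>\<Theta>. g \<theta> * mono_val \<theta> a) = 0)"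

lemma orthogonal_mult_affine:
  assumes "orthogonal_to_monomials \<Theta> g"
  shows "orthogonal_to_monomials \<Theta> (\<lambda>\<theta>. g \<theta> * (\<theta> i - k))"
  unfolding orthogonal_to_monomials_def
proof
  fix a
  let ?ai = "\<lambda>j. a j + (if j = i then 1 else 0::nat)"
  have "(\<Sum>\<theta>\<in>\<Theta>. g \<theta> * (\<theta> i - k) * mono_val \<theta> a)
        = (\<Sum>\<theta>\<in>\<Theta>. g \<theta> * mono_val \<theta> ?ai) - k * (\<Sum>\<theta>\<in>\<Theta>. g \<theta> * mono_val \<theta> a)"
    by (simp add: mono_val_add mono_val_unit sum_distrib_left sum_subtractf[symmetric] algebra_simps)
  also have "\<dots> = 0" using assms unfolding orthogonal_to_monomials_def by simp
  finally show "(\<Sum>\<theta>\<in>\<Theta>. g \<theta> * (\<theta> i - k) * mono_val \<theta> a) = 0" .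
qed

lemma orthogonal_mult_prod_affine:
  assumes "finite X" "orthogonal_to_monomials \<Theta> g"
  shows "orthogonal_to_monomials \<Theta> (\<lambda>\<theta>. g \<theta> * (\<Prod>x\<in>X. \<theta> (I x) - K x))"
  using assms
proof (induction X rule: finite_induct)
  case empty
  then show ?case by simp
next
  case (insert x X)
  then show ?case
    using orthogonal_mult_affine[of \<Theta> "\<lambda>\<theta>. g \<theta> * (\<Prod>x\<in>X. \<theta> (I x) - K x)" "I x" "K x"]
    by (simp add: ac_simps)
qed

text \<open>A weight vector annihilating all monomials vanishes: multiply by a product of affine
  functions that vanishes on \<Theta> - {\<phi>} but not at \<phi>, and pair with x^0.\<close>
lemma orthogonal_to_monomials_zero:
  fixes \<Theta> :: "('n::finite \<Rightarrow> 'a::{finite,field}) set"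
  assumes "orthogonal_to_monomials \<Theta> g" "\<phi> \<in> \<Theta>"
  shows "g \<phi> = 0"
proof -
  have "\<forall>\<psi>\<in>\<Theta> - {\<phi>}. \<exists>i. \<phi> i \<noteq> \<psi> i" by (auto simp: fun_eq_iff)
  then obtain ix where ix: "\<And>\<psi>. \<psi> \<in> \<Theta> - {\<phi>} \<Longrightarrow> \<phi> (ix \<psi>) \<noteq> \<psi> (ix \<psi>)" by metis
  define p where "p = (\<lambda>\<theta>. \<Prod>\<psi>\<in>\<Theta> - {\<phi>}. \<theta> (ix \<psi>) - \<psi> (ix \<psi>))"
  have p_zero: "p \<theta> = 0" if "\<theta> \<in> \<Theta> - {\<phi>}" for \<theta>
    unfolding p_def using that by (intro prod_zero) auto
  have "p \<phi> \<noteq> 0" unfolding p_def using ix by (simp add: prod_zero_iff)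
  have "0 = (\<Sum>\<theta>\<in>\<Theta>. g \<theta> * p \<theta> * mono_val \<theta> (\<lambda>_. 0))"
    using orthogonal_mult_prod_affine[OF _ assms(1), where X="\<Theta> - {\<phi>}" and I=ix and K="\<lambda>\<psi>. \<psi> (ix \<psi>)"]
    unfolding p_def orthogonal_to_monomials_def by simp
  also have "\<dots> = g \<phi> * p \<phi>"
    using assms(2) p_zero by (simp add: mono_val_zero sum.remove)
  finally show ?thesis using \<open>p \<phi> \<noteq> 0\<close> by simp
qed

text \<open>It suffices to annihilate the monomials indexed by D(\<Theta>), since on \<Theta> every monomial
  is a combination of those. Together with the previous lemma: P_\<Theta> is injective.\<close>
lemma orthogonal_to_delta_monomials:
  fixes \<Theta> :: "('n::finite \<Rightarrow> 'a::{finite,field}) set"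
  assumes mo: "monomial_order ord"
    and orth: "\<And>d. d \<in> delta_set ord \<Theta> \<Longrightarrow> (\<Sum>\<theta>\<in>\<Theta>. g \<theta> * mono_val \<theta> d) = 0"
  shows "orthogonal_to_monomials \<Theta> g"
  unfolding orthogonal_to_monomials_def
proof
  fix a
  let ?D = "delta_set ord \<Theta>"
  have "(\<Sum>\<theta>\<in>\<Theta>. g \<theta> * mono_val \<theta> a) =
        (\<Sum>\<theta>\<in>\<Theta>. g \<theta> * (\<Sum>d\<in>?D. remainder ord \<Theta> a d * mono_val \<theta> d))"
    using remainder_eval[OF mo] by (intro sum.cong) auto
  also have "\<dots> = (\<Sum>d\<in>?D. remainder ord \<Theta> a d * (\<Sum>\<theta>\<in>\<Theta>. g \<theta> * mono_val \<theta> d))"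
    by (simp add: sum_distrib_left ac_simps sum.swap[of _ \<Theta>])
  also have "\<dots> = 0" using orth by simp
  finally show "(\<Sum>\<theta>\<in>\<Theta>. g \<theta> * mono_val \<theta> a) = 0" .
qed

lemma ext_map_P_map:
  fixes \<Theta> :: "('n::finite \<Rightarrow> 'a::{finite,field}) set"
  assumes mo: "monomial_order ord" and h: "\<And>d. d \<in> delta_set ord \<Theta> \<Longrightarrow> h d = P_map \<Theta> c d"
  shows "ext_map ord \<Theta> h a = P_map \<Theta> c a"
proof -
  let ?D = "delta_set ord \<Theta>"
  have "ext_map ord \<Theta> h a = (\<Sum>d\<in>?D. remainder ord \<Theta> a d * (\<Sum>\<theta>\<in>\<Theta>. c \<theta> * mono_val \<theta> d))"
    unfolding ext_map_def using h by (simp add: P_map_def)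
  also have "\<dots> = (\<Sum>\<theta>\<in>\<Theta>. c \<theta> * (\<Sum>d\<in>?D. remainder ord \<Theta> a d * mono_val \<theta> d))"
    by (simp add: sum_distrib_left ac_simps sum.swap[of _ ?D])
  also have "\<dots> = P_map \<Theta> c a"
    unfolding P_map_def
  proof (rule sum.cong[OF refl])
    fix \<theta> assume "\<theta> \<in> \<Theta>"
    then show "c \<theta> * (\<Sum>d\<in>?D. remainder ord \<Theta> a d * mono_val \<theta> d) = c \<theta> * mono_val \<theta> a"
      using remainder_eval[OF mo, of \<theta> \<Theta> a] by simp
  qed
  finally show ?thesis .
qed

lemma C_map_P_map:
  fixes \<Theta> :: "('n::finite \<Rightarrow> 'a::{finite,field}) set"
  assumes mo: "monomial_order ord" and supp: "\<And>x. x \<notin> \<Theta> \<Longrightarrow> c x = 0"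
    and h: "\<And>d. d \<in> delta_set ord \<Theta> \<Longrightarrow> h d = P_map \<Theta> c d"
  shows "C_map ord \<Theta> h = c"
  unfolding C_map_def
proof (rule the_equality)
  show "(\<forall>x. x \<notin> \<Theta> \<longrightarrow> c x = 0) \<and> (\<forall>d\<in>delta_set ord \<Theta>. P_map \<Theta> c d = h d)"
    using supp h by simp
next
  fix c' assume c': "(\<forall>x. x \<notin> \<Theta> \<longrightarrow> c' x = 0) \<and> (\<forall>d\<in>delta_set ord \<Theta>. P_map \<Theta> c' d = h d)"
  have "(\<Sum>\<theta>\<in>\<Theta>. (c' \<theta> - c \<theta>) * mono_val \<theta> d) = 0" if "d \<in> delta_set ord \<Theta>" for d
    using c' h[OF that] that by (simp add: P_map_def left_diff_distrib sum_subtractf)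
  then have "orthogonal_to_monomials \<Theta> (\<lambda>\<theta>. c' \<theta> - c \<theta>)"
    by (rule orthogonal_to_delta_monomials[OF mo])
  then have "c' x - c x = 0" if "x \<in> \<Theta>" for x
    using orthogonal_to_monomials_zero that by blast
  then show "c' = c" using c' supp by (metis eq_iff_diff_eq_0 ext)
qed

text \<open>Writing e_\<Phi> for e restricted to \<Phi>, the received word satisfies
  r~ = h + P_\<Phi>(e_\<Phi>); h vanishes on B \<supseteq> D(\<Phi>), so r~ agrees with P_\<Phi>(e_\<Phi>) on D(\<Phi>),
  and parts (ii)-(iii) follow from the two lemmas above.\<close>
theorem mainTheorem8:
  fixes ord :: "('n::finite \<Rightarrow> nat) \<Rightarrow> ('n \<Rightarrow> nat) \<Rightarrow> bool"
    and \<Psi> \<Phi> :: "('n \<Rightarrow> 'a::{finite,field}) set"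
    and B :: "('n \<Rightarrow> nat) set"
    and c e :: "('n \<Rightarrow> 'a) \<Rightarrow> 'a"
  assumes "monomial_order ord"
    and "\<Psi> \<noteq> {}"
    and "B \<subseteq> delta_set ord \<Psi>"
    and "c \<in> Cperp B \<Psi>"
    and "\<Phi> \<noteq> {}" and "\<Phi> \<subseteq> \<Psi>"
    and "delta_set ord \<Phi> \<subseteq> B"
    and "\<forall>\<psi>\<in>\<Psi>. \<psi> \<notin> \<Phi> \<longrightarrow> e \<psi> = 0"
  shows "let h = P_map \<Psi> c; r = (\<lambda>\<psi>. c \<psi> + e \<psi>); rt = P_map \<Psi> r in
      (\<forall>b\<in>B. h b = 0 \<and> rt b = (\<Sum>\<phi>\<in>\<Phi>. e \<phi> * mono_val \<phi> b)) \<and>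
      (\<forall>d\<in>delta_set ord \<Psi>. h d = rt d - ext_map ord \<Phi> rt d) \<and>
      (\<forall>\<phi>\<in>\<Phi>. C_map ord \<Phi> rt \<phi> = e \<phi>) \<and>
      (\<forall>\<psi>\<in>\<Psi>. c \<psi> = r \<psi> - (if \<psi> \<in> \<Phi> then C_map ord \<Phi> rt \<psi> else 0))"
proof -
  note mo = assms(1)
  define h where "h = P_map \<Psi> c"
  define r where "r = (\<lambda>\<psi>. c \<psi> + e \<psi>)"
  define rt where "rt = P_map \<Psi> r"
  define e\<^sub>\<Phi> where "e\<^sub>\<Phi> = (\<lambda>x. if x \<in> \<Phi> then e x else 0)"
  have e_on_\<Phi>: "P_map \<Psi> e = P_map \<Phi> e\<^sub>\<Phi>"
    unfolding P_map_def e\<^sub>\<Phi>_def using assms(6,8)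
    by (auto intro!: sum.mono_neutral_cong_right)
  have rt_split: "rt d = h d + P_map \<Phi> e\<^sub>\<Phi> d" for d
    unfolding rt_def h_def r_def e_on_\<Phi>[symmetric] by (simp add: P_map_def distrib_right sum.distrib)
  have h_B: "h b = 0" if "b \<in> B" for b
    using assms(4) that unfolding h_def P_map_def Cperp_def by blast
  have rt_D\<Phi>: "rt d = P_map \<Phi> e\<^sub>\<Phi> d" if "d \<in> delta_set ord \<Phi>" for d
    using rt_split h_B assms(7) that by auto
  have C: "C_map ord \<Phi> rt = e\<^sub>\<Phi>"
    using C_map_P_map[OF mo _ rt_D\<Phi>] by (simp add: e\<^sub>\<Phi>_def)
  have "P_map \<Phi> e\<^sub>\<Phi> d = (\<Sum>\<phi>\<in>\<Phi>. e \<phi> * mono_val \<phi> d)" for d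
    unfolding P_map_def e\<^sub>\<Phi>_def by simp
  moreover have "h d = rt d - ext_map ord \<Phi> rt d" for d
  proof -
    have "ext_map ord \<Phi> rt d = P_map \<Phi> e\<^sub>\<Phi> d" by (rule ext_map_P_map[OF mo rt_D\<Phi>])
    then show ?thesis using rt_split[of d] by simp
  qed
  ultimately show ?thesis
    unfolding Let_def h_def[symmetric] r_def[symmetric] rt_def[symmetric]
    using rt_split h_B C assms(8) by (simp add: e\<^sub>\<Phi>_def r_def)
qed

end
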